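(* Let $\mathcal{L}$ be a relational language, let $\mathcal{A}$ be an $\mathcal{L}$-structure, and let $\Pi\mathcal{A}=\prod_{i\in I}\mathcal{A}$ be a direct power of $\mathcal{A}$ with nonempty index set $I$. Let $\mathbf{S}=\{E_j(X)\mid j\in J\}$ be a system of $\mathcal{L}(\Pi\mathcal{A})$-equations in a finite set of variables $X$. If for some $i\in I$ the projection $\pi_i(\mathbf{S})$ is inconsistent over $\mathcal{A}$, then $\mathbf{S}$ is inconsistent over $\Pi\mathcal{A}$. Moreover, if $\mathcal{A}$ is $\mathcal{L}(\mathcal{A})$-equationally Noetherian, then every $\mathcal{L}(\Pi\mathcal{A})$-system $\mathbf{S}$ that is inconsistent over $\Pi\mathcal{A}$ is equivalent over $\Pi\mathcal{A}$ to some finite subsystem of $\mathbf{S}$.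
   Context: For an $\mathcal{L}$-structure $\mathcal{B}$, $\mathcal{L}(\mathcal{B})$ denotes $\mathcal{L}$ extended by a constant symbol for each element of $\mathcal{B}$. An $\mathcal{L}(\mathcal{B})$-equation is an atomic formula of $\mathcal{L}(\mathcal{B})$ (i.e. $R(t_1,\dots,t_n)$ with $R\in\mathcal{L}$, or $t_1=t_2$, where each $t_k$ is a variable or a constant). A system is any set of equations in a fixed finite set of variables $X=\{x_1,\dots,x_n\}$; its solution set in $\mathcal{B}$ is $V_{\mathcal{B}}(\mathbf{S})\subseteq \mathcal{B}^n$. A system is inconsistent if its solution set is empty; two systems are equivalent over $\mathcal{B}$ if they have the same solution set in $\mathcal{B}$. $\mathcal{B}$ is $\mathcal{L}(\mathcal{B})$-equationally Noetherian if every $\mathcal{L}(\mathcal{B})$-system is equivalent over $\mathcal{B}$ to a finite subsystem. The direct power $\Pi\mathcal{A}=\prod_{i\in I}\mathcal{A}$ consists of all sequences $[a_i\mid i\in I]$ with each relation $R$ holding coordinatewise: $R(\mathbf{a}^{(1)},\dots,\mathbf{a}^{(n)})$ iff $R(a^{(1)}_i,\dots,a^{(n)}_i)$ for every $i\in I$. $\pi_i$ is the projection onto the $i$-th coordinate. For an $\mathcal{L}(\Pi\mathcal{A})$-equation $E(X,\vec{\mathbf{C}})$ with constants $\vec{\mathbf{C}}$, its $i$-th projection is the $\mathcal{L}(\mathcal{A})$-equation $\pi_i(E)=E(X,\pi_i(\vec{\mathbf{C}}))$, and $\pi_i(\mathbf{S})=\{\pi_i(E_j)\mid j\in J\}$.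 *)

theory Defs
  imports Main "HOL-Library.FuncSet"
begin

record 'r lang =
  syms :: "'r set"
  ar   :: "'r \<Rightarrow> nat"

record ('r, 'a) struc =
  carrier :: "'a set"
  rel     :: "'r \<Rightarrow> 'a list \<Rightarrow> bool"

definition is_struct :: "'r lang \<Rightarrow> ('r, 'a) struc \<Rightarrow> bool" where
  "is_struct L A \<longleftrightarrow>
     (\<forall>R ts. rel A R ts \<longrightarrow> R \<in> syms L \<and> length ts = ar L R \<and> set ts \<subseteq> carrier A)"

definition dpow :: "'i set \<Rightarrow> ('r, 'a) struc \<Rightarrow> ('r, 'i \<Rightarrow> 'a) struc" where
  "dpow I A = \<lparr> carrier = (\<Pi>\<^sub>E i\<in>I. carrier A),
     rel = (\<lambda>R bs. set bs \<subseteq> (\<Pi>\<^sub>E i\<in>I. carrier A) \<and>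
                   (\<forall>i\<in>I. rel A R (map (\<lambda>b. b i) bs))) \<rparr>"

datatype 'c trm = Var nat | Const 'c

datatype ('r, 'c) eqn = Rel 'r "'c trm list" | Equ "'c trm" "'c trm"

fun wf_trm :: "('r, 'a) struc \<Rightarrow> nat \<Rightarrow> 'a trm \<Rightarrow> bool" where
  "wf_trm B n (Var k) \<longleftrightarrow> k < n"
| "wf_trm B n (Const c) \<longleftrightarrow> c \<in> carrier B"

fun wf_eqn :: "'r lang \<Rightarrow> ('r, 'a) struc \<Rightarrow> nat \<Rightarrow> ('r, 'a) eqn \<Rightarrow> bool" where
  "wf_eqn L B n (Rel R ts) \<longleftrightarrow> R \<in> syms L \<and> length ts = ar L R \<and> (\<forall>t\<in>set ts. wf_trm B n t)"
| "wf_eqn L B n (Equ s t) \<longleftrightarrow> wf_trm B n s \<and> wf_trm B n t"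

definition system :: "'r lang \<Rightarrow> ('r, 'a) struc \<Rightarrow> nat \<Rightarrow> ('r, 'a) eqn set \<Rightarrow> bool" where
  "system L B n S \<longleftrightarrow> (\<forall>e\<in>S. wf_eqn L B n e)"

fun ev :: "'a list \<Rightarrow> 'a trm \<Rightarrow> 'a" where
  "ev xs (Var k) = xs ! k"
| "ev xs (Const c) = c"

fun sat :: "('r, 'a) struc \<Rightarrow> 'a list \<Rightarrow> ('r, 'a) eqn \<Rightarrow> bool" where
  "sat B xs (Rel R ts) \<longleftrightarrow> rel B R (map (ev xs) ts)"
| "sat B xs (Equ s t) \<longleftrightarrow> ev xs s = ev xs t"

definition V :: "('r, 'a) struc \<Rightarrow> nat \<Rightarrow> ('r, 'a) eqn set \<Rightarrow> 'a list set" where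
  "V B n S = {xs. length xs = n \<and> set xs \<subseteq> carrier B \<and> (\<forall>e\<in>S. sat B xs e)}"

definition eq_noeth :: "'r lang \<Rightarrow> ('r, 'a) struc \<Rightarrow> bool" where
  "eq_noeth L B \<longleftrightarrow> (\<forall>n S. system L B n S \<longrightarrow>
      (\<exists>S0 \<subseteq> S. finite S0 \<and> V B n S0 = V B n S))"

fun proj_trm :: "'i \<Rightarrow> ('i \<Rightarrow> 'a) trm \<Rightarrow> 'a trm" where
  "proj_trm i (Var k) = Var k"
| "proj_trm i (Const c) = Const (c i)"

fun proj :: "'i \<Rightarrow> ('r, 'i \<Rightarrow> 'a) eqn \<Rightarrow> ('r, 'a) eqn" where
  "proj i (Rel R ts) = Rel R (map (proj_trm i) ts)"
| "proj i (Equ s t) = Equ (proj_trm i s) (proj_trm i t)"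

end

theory Submission
  imports Defs
begin

(* A tuple over the power solves S exactly when, for every i, its i-th coordinate tuple solves
   the projected system; hence S is consistent iff every projection is (choosing one solution per
   coordinate). If S is inconsistent, some projection is, and over an equationally Noetherian A
   that projection already has a finite inconsistent subsystem; any finite S0 projecting onto it
   is then inconsistent over the power. *)

abbreviation coord :: "'i \<Rightarrow> ('i \<Rightarrow> 'a) list \<Rightarrow> 'a list" where
  "coord i xs \<equiv> map (\<lambda>b. b i) xs"

lemma ev_in_carrier:
  "set xs \<subseteq> carrier B \<Longrightarrow> wf_trm B (length xs) t \<Longrightarrow> ev xs t \<in> carrier B"
  by (cases t) auto

lemma ev_proj_trm:
  "wf_trm B (length xs) t \<Longrightarrow> ev (coord i xs) (proj_trm i t) = ev xs t i"
  by (cases t) auto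

lemma wf_eqn_proj:
  assumes "i \<in> I" "wf_eqn L (dpow I A) n e"
  shows "wf_eqn L A n (proj i e)"
proof -
  have "wf_trm A n (proj_trm i t)" if "wf_trm (dpow I A) n t" for t
    using that \<open>i \<in> I\<close> by (cases t) (auto simp: dpow_def)
  then show ?thesis
    using assms(2) by (cases e) auto
qed

lemma system_proj:
  "i \<in> I \<Longrightarrow> system L (dpow I A) n S \<Longrightarrow> system L A n (proj i ` S)"
  by (auto simp: system_def wf_eqn_proj)

lemma sat_dpow_iff:
  assumes xs: "set xs \<subseteq> carrier (dpow I A)" and e: "wf_eqn L (dpow I A) (length xs) e"
  shows "sat (dpow I A) xs e \<longleftrightarrow> (\<forall>i\<in>I. sat A (coord i xs) (proj i e))"
proof (cases e)
  case (Rel R ts)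
  have "set (map (ev xs) ts) \<subseteq> carrier (dpow I A)"
    using e xs Rel by (auto intro: ev_in_carrier)
  moreover have "coord i (map (ev xs) ts) = map (ev (coord i xs)) (map (proj_trm i) ts)" for i
    using e Rel by (auto simp: ev_proj_trm)
  ultimately show ?thesis
    using Rel by (simp add: dpow_def del: map_map)
next
  case (Equ s t)
  have "ev xs s \<in> carrier (dpow I A)" "ev xs t \<in> carrier (dpow I A)"
    using e xs Equ by (auto intro: ev_in_carrier)
  then have "ev xs s = ev xs t \<longleftrightarrow> (\<forall>i\<in>I. ev xs s i = ev xs t i)"
    by (auto simp: dpow_def intro: PiE_ext)
  then show ?thesis
    using e Equ by (simp add: ev_proj_trm[of "dpow I A"])
qed

lemma V_dpow:
  assumes "system L (dpow I A) n S"
  shows "V (dpow I A) n S = {xs. length xs = n \<and> set xs \<subseteq> carrier (dpow I A)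
                                 \<and> (\<forall>i\<in>I. coord i xs \<in> V A n (proj i ` S))}"
proof -
  have "xs \<in> V (dpow I A) n S \<longleftrightarrow> (\<forall>i\<in>I. coord i xs \<in> V A n (proj i ` S))"
    if xs: "length xs = n" "set xs \<subseteq> carrier (dpow I A)" for xs
  proof -
    have "(\<forall>e\<in>S. sat (dpow I A) xs e) \<longleftrightarrow> (\<forall>i\<in>I. \<forall>e\<in>S. sat A (coord i xs) (proj i e))"
      using xs assms sat_dpow_iff[of xs I A L] by (auto simp: system_def)
    moreover have "set (coord i xs) \<subseteq> carrier A" if "i \<in> I" for i
      using xs(2) that by (auto simp: dpow_def)
    ultimately show ?thesis
      using xs by (auto simp: V_def)
  qed
  moreover have "length xs = n \<and> set xs \<subseteq> carrier (dpow I A)" if "xs \<in> V (dpow I A) n S" for xs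
    using that by (simp add: V_def)
  ultimately show ?thesis
    by blast
qed

definition tuple_of_coords :: "'i set \<Rightarrow> ('i \<Rightarrow> 'a list) \<Rightarrow> nat \<Rightarrow> ('i \<Rightarrow> 'a) list" where
  "tuple_of_coords I f n = map (\<lambda>k. \<lambda>i\<in>I. f i ! k) [0..<n]"

lemma coord_tuple_of_coords:
  "i \<in> I \<Longrightarrow> length (f i) = n \<Longrightarrow> coord i (tuple_of_coords I f n) = f i"
  by (auto simp: tuple_of_coords_def intro: nth_equalityI)

lemma set_tuple_of_coords:
  assumes "\<And>i. i \<in> I \<Longrightarrow> length (f i) = n \<and> set (f i) \<subseteq> carrier A"
  shows "set (tuple_of_coords I f n) \<subseteq> carrier (dpow I A)"
  using assms by (fastforce simp: tuple_of_coords_def dpow_def)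

lemma V_dpow_eq_empty_iff:
  assumes "system L (dpow I A) n S"
  shows "V (dpow I A) n S = {} \<longleftrightarrow> (\<exists>i\<in>I. V A n (proj i ` S) = {})"
proof
  assume "\<exists>i\<in>I. V A n (proj i ` S) = {}"
  then show "V (dpow I A) n S = {}"
    using V_dpow[OF assms] by blast
next
  assume "V (dpow I A) n S = {}"
  show "\<exists>i\<in>I. V A n (proj i ` S) = {}"
  proof (rule ccontr)
    assume "\<not> ?thesis"
    then have "\<forall>i\<in>I. \<exists>ys. ys \<in> V A n (proj i ` S)"
      by blast
    then obtain f where f: "\<And>i. i \<in> I \<Longrightarrow> f i \<in> V A n (proj i ` S)"
      by metis
    define xs where "xs = tuple_of_coords I f n"
    have fi: "length (f i) = n" "set (f i) \<subseteq> carrier A" if "i \<in> I" for i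
      using f[OF that] by (auto simp: V_def)
    have "length xs = n"
      by (simp add: xs_def tuple_of_coords_def)
    moreover have "set xs \<subseteq> carrier (dpow I A)"
      unfolding xs_def by (rule set_tuple_of_coords) (simp add: fi)
    moreover have "coord i xs \<in> V A n (proj i ` S)" if "i \<in> I" for i
      using f fi that by (simp add: xs_def coord_tuple_of_coords)
    ultimately have "xs \<in> V (dpow I A) n S"
      by (simp add: V_dpow[OF assms])
    with \<open>V (dpow I A) n S = {}\<close> show False
      by blast
  qed
qed

lemma finite_inconsistent_subsystem:
  assumes "eq_noeth L A" "system L (dpow I A) n S" "V (dpow I A) n S = {}"
  shows "\<exists>S0\<subseteq>S. finite S0 \<and> V (dpow I A) n S0 = {}"
proof -
  obtain i where i: "i \<in> I" and "V A n (proj i ` S) = {}"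
    using assms(2,3) V_dpow_eq_empty_iff by blast
  moreover have "system L A n (proj i ` S)"
    using i assms(2) by (rule system_proj)
  ultimately obtain T0 where "T0 \<subseteq> proj i ` S" "finite T0" "V A n T0 = {}"
    using assms(1) unfolding eq_noeth_def by metis
  then obtain S0 where S0: "S0 \<subseteq> S" "finite S0" "V A n (proj i ` S0) = {}"
    by (metis finite_subset_image)
  have "system L (dpow I A) n S0"
    using assms(2) S0(1) by (auto simp: system_def)
  then have "V (dpow I A) n S0 = {}"
    using i S0(3) V_dpow_eq_empty_iff by blast
  with S0 show ?thesis
    by blast
qed

theorem lemma1:
  fixes L :: "'r lang" and A :: "('r, 'a) struc" and I :: "'i set"
    and n :: nat and S :: "('r, 'i \<Rightarrow> 'a) eqn set"
  assumes "is_struct L A"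
    and "I \<noteq> {}"
    and "system L (dpow I A) n S"
  shows "((\<exists>i\<in>I. V A n (proj i ` S) = {}) \<longrightarrow> V (dpow I A) n S = {})
     \<and> (eq_noeth L A \<longrightarrow> V (dpow I A) n S = {} \<longrightarrow>
          (\<exists>S0 \<subseteq> S. finite S0 \<and> V (dpow I A) n S0 = V (dpow I A) n S))"
proof (intro conjI impI)
  show "V (dpow I A) n S = {}" if "\<exists>i\<in>I. V A n (proj i ` S) = {}"
    using that V_dpow_eq_empty_iff[OF assms(3)] by blast
  show "\<exists>S0 \<subseteq> S. finite S0 \<and> V (dpow I A) n S0 = V (dpow I A) n S"
    if "eq_noeth L A" and "V (dpow I A) n S = {}"
    using finite_inconsistent_subsystem[OF that(1) assms(3) that(2)] that(2) by simp
qed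

end
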